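(* Let $p$ be a prime and $G=Z_{p^{\lambda_1}}\times\cdots\times Z_{p^{\lambda_n}}$ with $\lambda_1\le\cdots\le\lambda_n$. Every type of $G$ is automorphic to a unique canonical type. Moreover, every canonical type is the maximum type in its automorphism class: if $\mathbf a$ is canonical, then $\mathbf a$ is the maximum element (for the componentwise order) of $\{\mathbf b\in\Lambda(G): T(\mathbf b)\subseteq O(\mathbf a)\}$.
   Context: Set $\lambda_0=0$. Tuples of integers are ordered componentwise: $\mathbf a\le\mathbf b$ iff $a_i\le b_i$ for all $i$. $\Lambda(G)=\{\mathbf a\in\mathbb Z^n:\mathbf 0\le\mathbf a\le(\lambda_1,\dots,\lambda_n)\}$. For $\mathbf a\in\Lambda(G)$, the type $T(\mathbf a)$ is the set of $(g_1,\dots,g_n)\in G$ with $|g_i|=p^{a_i}$ for all $i$; the types partition $G$. Two elements are automorphic if some automorphism of $G$ maps one to the other; each type lies in a single $\mathrm{Aut}(G)$-orbit, and two types are called automorphic if they lie in the same orbit. $O(\mathbf a)$ denotes the $\mathrm{Aut}(G)$-orbit (automorphism class) containing $T(\mathbf a)$. A tuple $\mathbf a\in\Lambda(G)$ (and the type $T(\mathbf a)$) is canonical if (I) $a_i\ge a_{i-1}$ for all $i\in\{2,\dots,n\}$ and (II) $a_{i+1}-a_i\le\lambda_{i+1}-\lambda_i$ for all $i\in\{1,\dots,n-1\}$. *)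

theory Defs
  imports "HOL-Algebra.Algebra"
begin

definition cyc :: "nat \<Rightarrow> (nat \<Rightarrow> nat) \<Rightarrow> nat \<Rightarrow> int monoid" where
  "cyc p lam i = integer_mod_group (p ^ lam i)"

definition pgrp :: "nat \<Rightarrow> nat \<Rightarrow> (nat \<Rightarrow> nat) \<Rightarrow> (nat \<Rightarrow> int) monoid" where
  "pgrp p n lam = product_group {1..n} (cyc p lam)"

definition Lam :: "nat \<Rightarrow> (nat \<Rightarrow> nat) \<Rightarrow> (nat \<Rightarrow> nat) set" where
  "Lam n lam = {a. (\<forall>i\<in>{1..n}. a i \<le> lam i) \<and> (\<forall>i. i \<notin> {1..n} \<longrightarrow> a i = 0)}"

definition tuple_le :: "nat \<Rightarrow> (nat \<Rightarrow> nat) \<Rightarrow> (nat \<Rightarrow> nat) \<Rightarrow> bool" where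
  "tuple_le n a b \<longleftrightarrow> (\<forall>i\<in>{1..n}. a i \<le> b i)"

definition gtype :: "nat \<Rightarrow> nat \<Rightarrow> (nat \<Rightarrow> nat) \<Rightarrow> (nat \<Rightarrow> nat) \<Rightarrow> (nat \<Rightarrow> int) set" where
  "gtype p n lam a = {g \<in> carrier (pgrp p n lam).
      \<forall>i\<in>{1..n}. group.ord (cyc p lam i) (g i) = p ^ a i}"

definition automorphic :: "('a, 'b) monoid_scheme \<Rightarrow> 'a \<Rightarrow> 'a \<Rightarrow> bool" where
  "automorphic G x y \<longleftrightarrow> (\<exists>\<phi>\<in>iso G G. \<phi> x = y)"

text \<open>O(a): the Aut(G)-orbit containing T(a) (union of the orbits of elements of T(a);
  these coincide since T(a) is nonempty and lies in a single orbit).\<close>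
definition orb :: "nat \<Rightarrow> nat \<Rightarrow> (nat \<Rightarrow> nat) \<Rightarrow> (nat \<Rightarrow> nat) \<Rightarrow> (nat \<Rightarrow> int) set" where
  "orb p n lam a = {y. \<exists>x\<in>gtype p n lam a. automorphic (pgrp p n lam) x y}"

definition types_automorphic :: "nat \<Rightarrow> nat \<Rightarrow> (nat \<Rightarrow> nat) \<Rightarrow> (nat \<Rightarrow> nat) \<Rightarrow> (nat \<Rightarrow> nat) \<Rightarrow> bool" where
  "types_automorphic p n lam a b \<longleftrightarrow>
     (\<exists>x\<in>gtype p n lam a. \<exists>y\<in>gtype p n lam b. automorphic (pgrp p n lam) x y)"

text \<open>Canonical tuples, with the convention lam 0 = 0 irrelevant here since (II) ranges over i>=1.\<close>
definition canonical :: "nat \<Rightarrow> (nat \<Rightarrow> nat) \<Rightarrow> (nat \<Rightarrow> nat) \<Rightarrow> bool" where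
  "canonical n lam a \<longleftrightarrow> a \<in> Lam n lam \<and>
     (\<forall>i\<in>{2..n}. a (i - 1) \<le> a i) \<and>
     (\<forall>i\<in>{1..<n}. int (a (i + 1)) - int (a i) \<le> int (lam (i + 1)) - int (lam i))"

end

theory Submission
  imports Defs
begin

text \<open>
  Call a tuple b closed if b i \<le> b j + (lam i - lam j) for all i, j; for increasing lam these
  are exactly the canonical tuples, and every tuple a has a least closed majorant, its closure.
  For closed b, the property "x [^] p ^ b j is a (p ^ lam j)-th power for every j" holds exactly
  for the elements of type \<le> b, and it is preserved by automorphisms. Hence every automorphic
  image of an element of type a has type \<le> closure a. Conversely, if a is not closed, say
  a j < a i - (lam i - lam j), the transvection x j \<mapsto> x j + p ^ (lam j - lam i) * x i is an
  automorphism raising the j-th exponent to a i - (lam i - lam j) and fixing the others;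
  iterating reaches the closure. So each type is automorphic to the type of its closure, the
  unique canonical type in its class, and a canonical type dominates its whole class.
\<close>

lemma power_dvd_power_mult_iff:
  fixes q x :: "'a::idom"
  assumes "q \<noteq> 0"
  shows "q ^ L dvd q ^ B * x \<longleftrightarrow> q ^ (L - B) dvd x"
proof (cases "L \<le> B")
  case True
  then show ?thesis by (simp add: le_imp_power_dvd)
next
  case False
  then have "q ^ L = q ^ B * q ^ (L - B)" by (simp flip: power_add)
  then show ?thesis using assms by simp
qed

lemma mod_mult_mod_eq:
  fixes c u m m' :: int
  assumes "m dvd c * m'"
  shows "(c * (u mod m')) mod m = (c * u) mod m"
proof -
  have "c * (u mod m') - c * u = - ((c * m') * (u div m'))"
    unfolding minus_mult_div_eq_mod [symmetric] by (simp add: algebra_simps)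
  then show ?thesis using assms by (simp add: mod_eq_dvd_iff)
qed

lemma chain_le:
  fixes f :: "nat \<Rightarrow> 'a::preorder"
  assumes "\<forall>k\<in>{i..<j}. f k \<le> f (Suc k)" "i \<le> j"
  shows "f i \<le> f j"
  using assms(2,1)
proof (induction j rule: dec_induct)
  case (step k)
  then show ?case using order_trans by fastforce
qed simp

text \<open>z represents an element of order p ^ e in the cyclic group of order p ^ L.\<close>

definition cyclic_order_exp :: "nat \<Rightarrow> nat \<Rightarrow> nat \<Rightarrow> int \<Rightarrow> bool" where
  "cyclic_order_exp p L e z \<longleftrightarrow> (\<forall>k::nat. int p ^ L dvd int k * z \<longleftrightarrow> p ^ e dvd k)"

lemma cyclic_order_exp_mod:
  "cyclic_order_exp p L e (z mod int p ^ L) \<longleftrightarrow> cyclic_order_exp p L e z"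
  unfolding cyclic_order_exp_def by (simp add: dvd_eq_mod_eq_0 mod_mult_right_eq)

context
  fixes p :: nat
  assumes prime: "Factorial_Ring.prime p"
begin

lemma cyclic_order_exp_pow_dvd_iff:
  assumes "cyclic_order_exp p L e z"
  shows "int p ^ L dvd int p ^ b * z \<longleftrightarrow> e \<le> b"
proof -
  have "int p ^ L dvd int (p ^ b) * z \<longleftrightarrow> p ^ e dvd p ^ b"
    using assms unfolding cyclic_order_exp_def by blast
  then show ?thesis using prime_gt_1_nat[OF prime] by (simp add: dvd_power_iff_le)
qed

lemma cyclic_order_exp_iff:
  assumes "e \<le> L"
  shows "cyclic_order_exp p L e z \<longleftrightarrow>
    int p ^ (L - e) dvd z \<and> (0 < e \<longrightarrow> \<not> int p ^ (L - e + 1) dvd z)"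
proof
  assume ord: "cyclic_order_exp p L e z"
  have p0: "int p \<noteq> 0" using prime by auto
  have "int p ^ (L - e) dvd z"
    using cyclic_order_exp_pow_dvd_iff[OF ord, of e] power_dvd_power_mult_iff[OF p0] by blast
  moreover have "\<not> int p ^ (L - e + 1) dvd z" if "0 < e"
  proof -
    have "L - (e - 1) = L - e + 1" using that assms by simp
    moreover have "\<not> int p ^ L dvd int p ^ (e - 1) * z"
      using cyclic_order_exp_pow_dvd_iff[OF ord, of "e - 1"] that by simp
    ultimately show ?thesis using power_dvd_power_mult_iff[OF p0] by metis
  qed
  ultimately show "int p ^ (L - e) dvd z \<and> (0 < e \<longrightarrow> \<not> int p ^ (L - e + 1) dvd z)"
    by blast
next
  assume z: "int p ^ (L - e) dvd z \<and> (0 < e \<longrightarrow> \<not> int p ^ (L - e + 1) dvd z)"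
  show "cyclic_order_exp p L e z"
  proof (cases "e = 0")
    case True
    then show ?thesis using z unfolding cyclic_order_exp_def by simp
  next
    case False
    obtain u where u: "z = int p ^ (L - e) * u" using z by blast
    have "\<not> int p dvd u" using z False u by (auto simp: mult_dvd_mono)
    then have cop: "coprime (int p ^ e) u"
      using prime by (simp add: prime_imp_coprime prime_int_nat_transfer)
    have "L - (L - e) = e" using assms by simp
    then have "int p ^ L dvd int k * z \<longleftrightarrow> int p ^ e dvd int k * u" for k
      using power_dvd_power_mult_iff[of "int p" L "L - e" "int k * u"] prime u
      by (simp add: ac_simps)
    then have "int p ^ L dvd int k * z \<longleftrightarrow> int p ^ e dvd int k" for k
      using cop by (simp add: coprime_dvd_mult_left_iff)
    then show ?thesis unfolding cyclic_order_exp_def by (metis of_nat_dvd_iff of_nat_power)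
  qed
qed

lemma cyclic_order_exp_witness:
  assumes "e \<le> L"
  shows "cyclic_order_exp p L e (int p ^ (L - e) mod int p ^ L)"
proof -
  have "\<not> p ^ (L - e + 1) dvd p ^ (L - e)"
    using prime_gt_1_nat[OF prime] by (simp add: dvd_power_iff_le)
  then have "\<not> int p ^ (L - e + 1) dvd int p ^ (L - e)"
    by (metis of_nat_dvd_iff of_nat_power)
  then show ?thesis using assms by (simp add: cyclic_order_exp_mod cyclic_order_exp_iff)
qed


lemma cyclic_order_exp_shear:
  assumes xi: "cyclic_order_exp p Li ai xi" and xj: "cyclic_order_exp p Lj aj xj"
    and ai: "ai \<le> Li" and aj: "aj \<le> Lj" and less: "aj < ai - (Li - Lj)"
  shows "cyclic_order_exp p Lj (ai - (Li - Lj)) (xj + int p ^ (Lj - Li) * xi)"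
proof -
  define e where "e = ai - (Li - Lj)"
  define s where "s = Lj - e"
  have p0: "int p \<noteq> 0" using prime by auto
  have e: "0 < e" "e \<le> Lj" using less ai unfolding e_def by linarith+
  have s: "s = (Lj - Li) + (Li - ai)" "s + 1 \<le> Lj - aj"
    using less ai aj unfolding s_def e_def by linarith+
  have xi_exact: "int p ^ (Li - ai) dvd xi" "\<not> int p ^ (Li - ai + 1) dvd xi"
    using xi e ai by (auto simp: cyclic_order_exp_iff e_def)
  have "int p ^ (Lj - aj) dvd xj"
    using xj aj by (simp add: cyclic_order_exp_iff)
  then have xj_dvd: "int p ^ (s + 1) dvd xj"
    using s(2) le_imp_power_dvd dvd_trans by blast
  have "int p ^ s dvd int p ^ (Lj - Li) * xi"
    unfolding s(1) power_add using xi_exact(1) by (rule mult_dvd_mono[OF dvd_refl])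
  moreover have "\<not> int p ^ (s + 1) dvd int p ^ (Lj - Li) * xi"
    using xi_exact(2) power_dvd_power_mult_iff[OF p0, of "s + 1" "Lj - Li" xi] s(1) by simp
  ultimately have "int p ^ s dvd xj + int p ^ (Lj - Li) * xi"
    and "\<not> int p ^ (s + 1) dvd xj + int p ^ (Lj - Li) * xi"
    using xj_dvd dvd_add_right_iff dvd_trans[OF le_imp_power_dvd[of s "s + 1"]] by auto
  then show ?thesis
    using e unfolding e_def[symmetric] s_def by (simp add: cyclic_order_exp_iff)
qed

end

context
  fixes n :: nat and lam :: "nat \<Rightarrow> nat"
begin

definition closed_tuple :: "(nat \<Rightarrow> nat) \<Rightarrow> bool" where
  "closed_tuple b \<longleftrightarrow> (\<forall>i\<in>{1..n}. \<forall>j\<in>{1..n}. b i \<le> b j + (lam i - lam j))"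

definition tuple_closure :: "(nat \<Rightarrow> nat) \<Rightarrow> nat \<Rightarrow> nat" where
  "tuple_closure a j =
    (if j \<in> {1..n} then Max ((\<lambda>i. a i - (lam i - lam j)) ` {1..n}) else 0)"

lemma Lam_le: "a \<in> Lam n lam \<Longrightarrow> i \<in> {1..n} \<Longrightarrow> a i \<le> lam i"
  unfolding Lam_def by blast

lemma Lam_outside: "a \<in> Lam n lam \<Longrightarrow> i \<notin> {1..n} \<Longrightarrow> a i = 0"
  unfolding Lam_def by blast

lemma tuple_closure_outside: "j \<notin> {1..n} \<Longrightarrow> tuple_closure a j = 0"
  unfolding tuple_closure_def by (rule if_not_P)

lemma tuple_closure_ge:
  "i \<in> {1..n} \<Longrightarrow> j \<in> {1..n} \<Longrightarrow> a i - (lam i - lam j) \<le> tuple_closure a j"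
  unfolding tuple_closure_def by (auto intro!: Max_ge)

lemma tuple_closure_ge_self: "j \<in> {1..n} \<Longrightarrow> a j \<le> tuple_closure a j"
  using tuple_closure_ge[of j j a] by simp

lemma tuple_closure_le_iff:
  "j \<in> {1..n} \<Longrightarrow> tuple_closure a j \<le> c \<longleftrightarrow> (\<forall>i\<in>{1..n}. a i - (lam i - lam j) \<le> c)"
  unfolding tuple_closure_def by (auto simp: Max_le_iff)

lemma closed_tuple_closure: "closed_tuple (tuple_closure a)"
  unfolding closed_tuple_def
proof (intro ballI)
  fix i j assume i: "i \<in> {1..n}" and j: "j \<in> {1..n}"
  have "a k - (lam k - lam i) \<le> tuple_closure a j + (lam i - lam j)" if "k \<in> {1..n}" for k
    using tuple_closure_ge[OF that j, of a] by linarith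
  then show "tuple_closure a i \<le> tuple_closure a j + (lam i - lam j)"
    using tuple_closure_le_iff[OF i] by blast
qed

lemma tuple_closure_least:
  assumes "closed_tuple b" "\<forall>i\<in>{1..n}. a i \<le> b i" "j \<in> {1..n}"
  shows "tuple_closure a j \<le> b j"
proof -
  have "a i - (lam i - lam j) \<le> b j" if "i \<in> {1..n}" for i
    using assms that unfolding closed_tuple_def by fastforce
  then show ?thesis using tuple_closure_le_iff[OF assms(3)] by blast
qed

lemma tuple_closure_mono:
  assumes "\<forall>i\<in>{1..n}. a i \<le> a' i"
  shows "tuple_closure a j \<le> tuple_closure a' j"
proof (cases "j \<in> {1..n}")
  case True
  have "a i - (lam i - lam j) \<le> tuple_closure a' j" if "i \<in> {1..n}" for i
    using assms tuple_closure_ge[OF that True, of a'] that by fastforce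
  then show ?thesis using tuple_closure_le_iff[OF True] by blast
qed (simp add: tuple_closure_outside)

lemma tuple_closure_Lam: "a \<in> Lam n lam \<Longrightarrow> tuple_closure a \<in> Lam n lam"
  unfolding Lam_def by (auto simp: tuple_closure_le_iff tuple_closure_outside)

lemma tuple_closure_closed_eq:
  assumes "a \<in> Lam n lam" "closed_tuple a"
  shows "tuple_closure a = a"
proof
  fix j show "tuple_closure a j = a j"
  proof (cases "j \<in> {1..n}")
    case True
    then show ?thesis
      using tuple_closure_ge_self[OF True, of a] tuple_closure_least[OF assms(2)] by fastforce
  next
    case False
    then show ?thesis by (simp add: Lam_outside[OF assms(1)] tuple_closure_outside)
  qed
qed

lemma tuple_closure_eqI:
  assumes "\<forall>i\<in>{1..n}. a i \<le> a' i" "\<forall>i\<in>{1..n}. a' i \<le> tuple_closure a i"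
  shows "tuple_closure a' = tuple_closure a"
proof
  fix j show "tuple_closure a' j = tuple_closure a j"
  proof (cases "j \<in> {1..n}")
    case True
    then show ?thesis
      using tuple_closure_mono[OF assms(1)] tuple_closure_least[OF closed_tuple_closure assms(2)]
      by (simp add: antisym)
  qed (simp add: tuple_closure_outside)
qed

lemma increasing_le:
  assumes mono: "\<forall>i\<in>{2..n}. lam (i - 1) \<le> lam i" and "1 \<le> i" "i \<le> j" "j \<le> n"
  shows "lam i \<le> lam j"
proof -
  have "lam k \<le> lam (Suc k)" if "k \<in> {i..<j}" for k
    using mono[rule_format, of "Suc k"] that assms(2,4) by simp
  then show ?thesis using chain_le[of i j lam] assms(3) by blast
qed

lemma canonical_imp_closed_tuple:
  assumes mono: "\<forall>i\<in>{2..n}. lam (i - 1) \<le> lam i" and can: "canonical n lam b"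
  shows "closed_tuple b"
proof -
  have b_step: "b k \<le> b (Suc k)" if "k \<in> {1..<n}" for k
  proof -
    have "Suc k \<in> {2..n}" using that by simp
    then show ?thesis using can unfolding canonical_def by fastforce
  qed
  have d_step: "int (lam k) - int (b k) \<le> int (lam (Suc k)) - int (b (Suc k))"
    if "k \<in> {1..<n}" for k
  proof -
    have "int (b (k + 1)) - int (b k) \<le> int (lam (k + 1)) - int (lam k)"
      using can that unfolding canonical_def by blast
    then show ?thesis by simp
  qed
  have "b i \<le> b j + (lam i - lam j)" if i: "i \<in> {1..n}" and j: "j \<in> {1..n}" for i j
  proof (cases "i \<le> j")
    case True
    have "\<forall>k\<in>{i..<j}. b k \<le> b (Suc k)" using i j b_step by simp
    then show ?thesis using True chain_le[of i j b] by simp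
  next
    case False
    have "\<forall>k\<in>{j..<i}. int (lam k) - int (b k) \<le> int (lam (Suc k)) - int (b (Suc k))"
      using i j d_step by simp
    then have "int (lam j) - int (b j) \<le> int (lam i) - int (b i)"
      using False chain_le[of j i "\<lambda>k. int (lam k) - int (b k)"] by simp
    then show ?thesis using increasing_le[OF mono, of j i] i j False by simp
  qed
  then show ?thesis unfolding closed_tuple_def by blast
qed

lemma closed_tuple_imp_canonical:
  assumes mono: "\<forall>i\<in>{2..n}. lam (i - 1) \<le> lam i" and b: "b \<in> Lam n lam" "closed_tuple b"
  shows "canonical n lam b"
proof -
  have "b (i - 1) \<le> b i" if "i \<in> {2..n}" for i
  proof -
    have "i - 1 \<in> {1..n}" "i \<in> {1..n}" using that by auto
    then have "b (i - 1) \<le> b i + (lam (i - 1) - lam i)"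
      using b(2) unfolding closed_tuple_def by blast
    then show ?thesis using mono that by simp
  qed
  moreover have "int (b (i + 1)) - int (b i) \<le> int (lam (i + 1)) - int (lam i)"
    if "i \<in> {1..<n}" for i
  proof -
    have "i + 1 \<in> {1..n}" "i \<in> {1..n}" using that by auto
    then have "b (i + 1) \<le> b i + (lam (i + 1) - lam i)"
      using b(2) unfolding closed_tuple_def by blast
    moreover have "lam i \<le> lam (i + 1)" using increasing_le[OF mono, of i "i + 1"] that by simp
    ultimately show ?thesis by simp
  qed
  ultimately show ?thesis using b(1) unfolding canonical_def by blast
qed

lemma canonical_iff_closed_tuple:
  "\<forall>i\<in>{2..n}. lam (i - 1) \<le> lam i \<Longrightarrow>
    canonical n lam b \<longleftrightarrow> b \<in> Lam n lam \<and> closed_tuple b"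
  using canonical_imp_closed_tuple closed_tuple_imp_canonical
  unfolding canonical_def by blast

end

locale prime_power_product =
  fixes p n :: nat and lam :: "nat \<Rightarrow> nat"
  assumes prime: "Factorial_Ring.prime p"
begin

abbreviation "G \<equiv> pgrp p n lam"
abbreviation "M i \<equiv> int p ^ lam i"

lemma p_pos: "0 < p"
  using prime prime_gt_0_nat by blast

lemma group_G: "group G"
  unfolding pgrp_def cyc_def by (rule product_group) simp

lemma carrier_G: "carrier G = (\<Pi>\<^sub>E i\<in>{1..n}. {0..<M i})"
  unfolding pgrp_def cyc_def using p_pos by (simp add: carrier_integer_mod_group)

lemma mult_G: "x \<otimes>\<^bsub>G\<^esub> y = (\<lambda>i\<in>{1..n}. (x i + y i) mod M i)"
  unfolding pgrp_def cyc_def by simp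

lemma pow_G: "x [^]\<^bsub>G\<^esub> (k::nat) = (\<lambda>i\<in>{1..n}. (int k * x i) mod M i)"
proof (induction k)
  case 0
  then show ?case unfolding pgrp_def cyc_def by simp
next
  case (Suc k)
  show ?case unfolding nat_pow_Suc Suc mult_G
    by (rule restrict_ext) (simp add: mod_add_right_eq distrib_right add.commute)
qed

lemma gtype_iff:
  "x \<in> gtype p n lam a \<longleftrightarrow>
    x \<in> carrier G \<and> (\<forall>i\<in>{1..n}. cyclic_order_exp p (lam i) (a i) (x i))"
proof -
  have "group.ord (cyc p lam i) (x i) = p ^ a i \<longleftrightarrow> cyclic_order_exp p (lam i) (a i) (x i)"
    if "x \<in> carrier G" "i \<in> {1..n}" for i
  proof -
    have "x i \<in> carrier (cyc p lam i)"
      using that unfolding pgrp_def by (auto simp: PiE_iff)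
    then show ?thesis
      using group.ord_unique[of "cyc p lam i" "x i"]
      unfolding cyc_def cyclic_order_exp_def by (simp add: dvd_eq_mod_eq_0)
  qed
  then show ?thesis unfolding gtype_def by auto
qed

lemma gtype_pow_dvd_iff:
  "x \<in> gtype p n lam a \<Longrightarrow> i \<in> {1..n} \<Longrightarrow> M i dvd int p ^ b * x i \<longleftrightarrow> a i \<le> b"
  unfolding gtype_iff using cyclic_order_exp_pow_dvd_iff[OF prime] by blast

lemma gtype_nonempty:
  assumes "a \<in> Lam n lam"
  shows "gtype p n lam a \<noteq> {}"
proof -
  define x where "x = (\<lambda>k\<in>{1..n}. int p ^ (lam k - a k) mod M k)"
  have "x \<in> carrier G" unfolding carrier_G x_def using p_pos by (simp add: PiE_iff)
  moreover have "cyclic_order_exp p (lam k) (a k) (x k)" if "k \<in> {1..n}" for k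
  proof -
    have "a k \<le> lam k" using Lam_le[OF assms that] .
    then show ?thesis using cyclic_order_exp_witness[OF prime] that unfolding x_def by simp
  qed
  ultimately have "x \<in> gtype p n lam a" unfolding gtype_iff by blast
  then show ?thesis by blast
qed

text \<open>An automorphism-invariant property; for closed b it says that x has type \<le> b.\<close>

definition pow_divisible :: "(nat \<Rightarrow> nat) \<Rightarrow> (nat \<Rightarrow> int) \<Rightarrow> bool" where
  "pow_divisible b x \<longleftrightarrow> x \<in> carrier G \<and>
    (\<forall>j\<in>{1..n}. \<exists>y\<in>carrier G. x [^]\<^bsub>G\<^esub> (p ^ b j) = y [^]\<^bsub>G\<^esub> (p ^ lam j))"

lemma pow_divisible_hom:
  assumes hom: "\<phi> \<in> hom G G" and x: "pow_divisible b x"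
  shows "pow_divisible b (\<phi> x)"
  unfolding pow_divisible_def
proof (intro conjI ballI)
  have xG: "x \<in> carrier G" using x unfolding pow_divisible_def by blast
  then show "\<phi> x \<in> carrier G" by (rule hom_in_carrier[OF hom])
  fix j assume "j \<in> {1..n}"
  then obtain y where y: "y \<in> carrier G" "x [^]\<^bsub>G\<^esub> (p ^ b j) = y [^]\<^bsub>G\<^esub> (p ^ lam j)"
    using x unfolding pow_divisible_def by blast
  have "\<phi> x [^]\<^bsub>G\<^esub> (p ^ b j) = \<phi> y [^]\<^bsub>G\<^esub> (p ^ lam j)"
    using hom_nat_pow[OF hom xG group_G group_G] hom_nat_pow[OF hom y(1) group_G group_G] y(2)
    by metis
  then show "\<exists>y'\<in>carrier G. \<phi> x [^]\<^bsub>G\<^esub> (p ^ b j) = y' [^]\<^bsub>G\<^esub> (p ^ lam j)"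
    using hom_in_carrier[OF hom y(1)] by blast
qed

lemma pow_divisible_dvd:
  assumes "pow_divisible b x" "i \<in> {1..n}"
  shows "M i dvd int p ^ b i * x i"
proof -
  obtain y where y: "x [^]\<^bsub>G\<^esub> (p ^ b i) = y [^]\<^bsub>G\<^esub> (p ^ lam i)"
    using assms unfolding pow_divisible_def by blast
  have "(int (p ^ b i) * x i) mod M i = (int (p ^ lam i) * y i) mod M i"
    using fun_cong[OF y[unfolded pow_G], of i] assms(2) by simp
  then show ?thesis by (simp add: dvd_eq_mod_eq_0)
qed

lemma pow_divisible_if_dvd:
  assumes closed: "closed_tuple n lam b" and le: "\<forall>i\<in>{1..n}. b i \<le> lam i"
    and x: "x \<in> carrier G" and dvd: "\<forall>i\<in>{1..n}. M i dvd int p ^ b i * x i"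
  shows "pow_divisible b x"
proof -
  have p0: "int p \<noteq> 0" using p_pos by simp
  have "\<exists>y\<in>carrier G. x [^]\<^bsub>G\<^esub> (p ^ b j) = y [^]\<^bsub>G\<^esub> (p ^ lam j)" if j: "j \<in> {1..n}" for j
  proof -
    \<comment> \<open>the components with \<open>lam i \<le> lam j\<close> already vanish; the others are divided by \<open>p ^ lam j\<close>\<close>
    define y where "y = (\<lambda>i\<in>{1..n}. if lam i \<le> lam j then 0
                       else ((int p ^ b j * x i) div int p ^ lam j) mod M i)"
    have y: "y \<in> carrier G"
      unfolding carrier_G y_def using p_pos by (simp add: PiE_iff)
    have "(int p ^ b j * x i) mod M i = (int p ^ lam j * y i) mod M i" if i: "i \<in> {1..n}" for i
    proof -
      have xi: "int p ^ (lam i - b i) dvd x i"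
        using dvd i power_dvd_power_mult_iff[OF p0] by blast
      have bij: "b i \<le> b j + (lam i - lam j)"
        using closed i j unfolding closed_tuple_def by blast
      show ?thesis
      proof (cases "lam i \<le> lam j")
        case True
        then have "lam i - b j \<le> lam i - b i" using bij by simp
        then have "int p ^ (lam i - b j) dvd x i" by (rule dvd_trans[OF le_imp_power_dvd xi])
        then have "M i dvd int p ^ b j * x i" using power_dvd_power_mult_iff[OF p0] by blast
        then show ?thesis using True i by (simp add: y_def dvd_eq_mod_eq_0)
      next
        case False
        then have "lam j - b j \<le> lam i - b i" using bij le i j by fastforce
        then have "int p ^ (lam j - b j) dvd x i" by (rule dvd_trans[OF le_imp_power_dvd xi])
        then have "int p ^ lam j dvd int p ^ b j * x i" using power_dvd_power_mult_iff[OF p0] by blast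
        then show ?thesis using False i by (simp add: y_def mod_mult_right_eq)
      qed
    qed
    then have "x [^]\<^bsub>G\<^esub> (p ^ b j) = y [^]\<^bsub>G\<^esub> (p ^ lam j)"
      unfolding pow_G by (intro restrict_ext) simp
    then show ?thesis using y by blast
  qed
  then show ?thesis unfolding pow_divisible_def using x by blast
qed

lemma iso_gtype_le_closed:
  assumes iso: "\<phi> \<in> iso G G" and x: "x \<in> gtype p n lam a" and y: "\<phi> x \<in> gtype p n lam b"
    and closed: "closed_tuple n lam c" and c_le: "\<forall>i\<in>{1..n}. c i \<le> lam i"
    and a_le: "\<forall>i\<in>{1..n}. a i \<le> c i"
  shows "\<forall>i\<in>{1..n}. b i \<le> c i"
proof -
  have "x \<in> carrier G" using x by (simp add: gtype_iff)
  moreover have "\<forall>i\<in>{1..n}. M i dvd int p ^ c i * x i"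
    using x a_le by (simp add: gtype_pow_dvd_iff)
  ultimately have "pow_divisible c x" by (rule pow_divisible_if_dvd[OF closed c_le])
  then have "pow_divisible c (\<phi> x)" by (rule pow_divisible_hom[OF iso_imp_homomorphism[OF iso]])
  then have "\<forall>i\<in>{1..n}. M i dvd int p ^ c i * \<phi> x i" using pow_divisible_dvd by blast
  then show ?thesis using y by (simp add: gtype_pow_dvd_iff)
qed

definition transvection :: "int \<Rightarrow> nat \<Rightarrow> nat \<Rightarrow> (nat \<Rightarrow> int) \<Rightarrow> nat \<Rightarrow> int" where
  "transvection c i j y = (\<lambda>k\<in>{1..n}. if k = j then (y j + c * y i) mod M j else y k)"

lemma transvection_carrier:
  "j \<in> {1..n} \<Longrightarrow> y \<in> carrier G \<Longrightarrow> transvection c i j y \<in> carrier G"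
  unfolding carrier_G transvection_def using p_pos by (auto simp: PiE_iff)

lemma transvection_mult:
  assumes "i \<in> {1..n}" "j \<in> {1..n}" "i \<noteq> j" and dvd: "M j dvd c * M i"
  shows "transvection c i j (y \<otimes>\<^bsub>G\<^esub> z) = transvection c i j y \<otimes>\<^bsub>G\<^esub> transvection c i j z"
proof -
  have "((y j + z j) mod M j + c * ((y i + z i) mod M i)) mod M j
      = ((y j + z j) mod M j + c * (y i + z i)) mod M j"
    by (metis mod_add_right_eq mod_mult_mod_eq[OF dvd])
  also have "\<dots> = ((y j + c * y i) + (z j + c * z i)) mod M j"
    by (simp only: mod_add_left_eq) (simp add: algebra_simps)
  also have "\<dots> = ((y j + c * y i) mod M j + (z j + c * z i) mod M j) mod M j"
    by (simp add: mod_add_eq)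
  finally show ?thesis
    using assms unfolding transvection_def mult_G by (intro restrict_ext) simp
qed

lemma transvection_inverse:
  assumes "i \<in> {1..n}" "j \<in> {1..n}" "i \<noteq> j" and y: "y \<in> carrier G"
  shows "transvection (- c) i j (transvection c i j y) = y"
proof (rule extensionalityI[of _ "{1..n}"])
  show "transvection (- c) i j (transvection c i j y) \<in> extensional {1..n}"
    unfolding transvection_def by simp
  show "y \<in> extensional {1..n}" using y unfolding carrier_G by (simp add: PiE_def)
  have "y j \<in> {0..<M j}" using y assms unfolding carrier_G by auto
  then show "transvection (- c) i j (transvection c i j y) k = y k" if "k \<in> {1..n}" for k
    using assms that unfolding transvection_def by (simp add: mod_simps)
qed

lemma transvection_iso:
  assumes "i \<in> {1..n}" "j \<in> {1..n}" "i \<noteq> j" "M j dvd c * M i"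
  shows "transvection c i j \<in> iso G G"
proof -
  have "transvection c i j \<in> hom G G"
    using assms transvection_carrier transvection_mult by (auto intro!: homI)
  moreover have "bij_betw (transvection c i j) (carrier G) (carrier G)"
    using assms transvection_carrier transvection_inverse[of _ _ _ c]
      transvection_inverse[of _ _ _ "- c"]
    by (intro bij_betw_byWitness[where f' = "transvection (- c) i j"]) auto
  ultimately show ?thesis unfolding iso_def by blast
qed

lemma transvection_pow_iso:
  assumes "i \<in> {1..n}" "j \<in> {1..n}" "i \<noteq> j"
  shows "transvection (int p ^ (lam j - lam i)) i j \<in> iso G G"
proof -
  have "lam j \<le> lam j - lam i + lam i" by simp
  then have "M j dvd int p ^ (lam j - lam i) * M i" by (simp flip: power_add add: le_imp_power_dvd)
  then show ?thesis using assms by (rule transvection_iso[rotated 3])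
qed

lemma transvection_gtype:
  assumes a: "a \<in> Lam n lam" and ij: "i \<in> {1..n}" "j \<in> {1..n}"
    and x: "x \<in> gtype p n lam a" and less: "a j < a i - (lam i - lam j)"
  shows "transvection (int p ^ (lam j - lam i)) i j x
    \<in> gtype p n lam (a(j := a i - (lam i - lam j)))"
proof -
  have "cyclic_order_exp p (lam i) (a i) (x i)" "cyclic_order_exp p (lam j) (a j) (x j)"
    using x ij by (simp_all add: gtype_iff)
  then have "cyclic_order_exp p (lam j) (a i - (lam i - lam j)) (x j + int p ^ (lam j - lam i) * x i)"
    using cyclic_order_exp_shear[OF prime] Lam_le[OF a] ij less by blast
  then show ?thesis
    using x ij transvection_carrier[OF ij(2)]
    by (auto simp: gtype_iff transvection_def cyclic_order_exp_mod)
qed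

lemma automorphic_to_closure:
  assumes "a \<in> Lam n lam" "x \<in> gtype p n lam a"
  shows "\<exists>\<phi>\<in>iso G G. \<phi> x \<in> gtype p n lam (tuple_closure n lam a)"
  using assms
proof (induction "\<Sum>k\<in>{1..n}. lam k - a k" arbitrary: a x rule: less_induct)
  case less
  note a = less.prems(1) and x = less.prems(2)
  show ?case
  proof (cases "closed_tuple n lam a")
    case True
    then show ?thesis using x tuple_closure_closed_eq[OF a] iso_set_refl by fastforce
  next
    case False
    then obtain i j where ij: "i \<in> {1..n}" "j \<in> {1..n}" and less_ij: "a j < a i - (lam i - lam j)"
      unfolding closed_tuple_def by (auto simp: not_le)
    define a' where "a' = a(j := a i - (lam i - lam j))"
    define \<tau> where "\<tau> = transvection (int p ^ (lam j - lam i)) i j"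
    have "a i \<le> lam i" using Lam_le[OF a ij(1)] .
    then have a': "a' \<in> Lam n lam" using a ij(2) unfolding a'_def Lam_def by auto
    have "(\<Sum>k\<in>{1..n}. lam k - a' k) < (\<Sum>k\<in>{1..n}. lam k - a k)"
    proof (rule sum_strict_mono_ex1)
      show "\<forall>k\<in>{1..n}. lam k - a' k \<le> lam k - a k" using less_ij unfolding a'_def by auto
      show "\<exists>k\<in>{1..n}. lam k - a' k < lam k - a k"
        using less_ij ij \<open>a i \<le> lam i\<close> unfolding a'_def by (intro bexI[of _ j]) auto
    qed simp
    moreover have "\<tau> x \<in> gtype p n lam a'"
      unfolding \<tau>_def a'_def using transvection_gtype[OF a ij x less_ij] .
    ultimately obtain \<phi> where \<phi>: "\<phi> \<in> iso G G" "\<phi> (\<tau> x) \<in> gtype p n lam (tuple_closure n lam a')"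
      using less.hyps a' by blast
    have \<tau>: "\<tau> \<in> iso G G" unfolding \<tau>_def using ij less_ij by (intro transvection_pow_iso) auto
    have "a i - (lam i - lam j) \<le> tuple_closure n lam a j"
      using tuple_closure_ge[OF ij] .
    then have "tuple_closure n lam a' = tuple_closure n lam a"
      using less_ij tuple_closure_ge_self[where a = a]
      unfolding a'_def by (intro tuple_closure_eqI) auto
    then show ?thesis using \<phi> iso_set_trans[OF \<tau> \<phi>(1)] by (metis comp_apply)
  qed
qed

lemma types_automorphic_closure:
  assumes "a \<in> Lam n lam"
  shows "types_automorphic p n lam a (tuple_closure n lam a)"
proof -
  obtain x where "x \<in> gtype p n lam a" using gtype_nonempty[OF assms] by blast
  then show ?thesis
    using automorphic_to_closure[OF assms] unfolding types_automorphic_def automorphic_def by blast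
qed

lemma types_automorphic_closed_eq_closure:
  assumes a: "a \<in> Lam n lam" and b: "b \<in> Lam n lam" "closed_tuple n lam b"
    and "types_automorphic p n lam a b"
  shows "b = tuple_closure n lam a"
proof
  obtain x \<phi> where x: "x \<in> gtype p n lam a" and \<phi>: "\<phi> \<in> iso G G" and y: "\<phi> x \<in> gtype p n lam b"
    using assms(4) unfolding types_automorphic_def automorphic_def by blast
  define \<psi> where "\<psi> = inv_into (carrier G) \<phi>"
  have \<psi>: "\<psi> \<in> iso G G" unfolding \<psi>_def using group.iso_set_sym[OF group_G \<phi>] .
  have "x \<in> carrier G" using x by (simp add: gtype_iff)
  then have "\<psi> (\<phi> x) \<in> gtype p n lam a" using x \<phi> unfolding \<psi>_def iso_iff by (simp add: inv_into_f_f)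
  then have "\<forall>i\<in>{1..n}. a i \<le> b i"
    using iso_gtype_le_closed[OF \<psi> y _ b(2)] Lam_le[OF b(1)] by blast
  then have le: "tuple_closure n lam a i \<le> b i" if "i \<in> {1..n}" for i
    using tuple_closure_least[OF b(2)] that by blast
  have "\<forall>k\<in>{1..n}. tuple_closure n lam a k \<le> lam k"
    using Lam_le[OF tuple_closure_Lam[OF a]] by blast
  moreover have "\<forall>k\<in>{1..n}. a k \<le> tuple_closure n lam a k"
    using tuple_closure_ge_self by blast
  ultimately have ge: "\<forall>i\<in>{1..n}. b i \<le> tuple_closure n lam a i"
    using iso_gtype_le_closed[OF \<phi> x y closed_tuple_closure] by blast
  fix i show "b i = tuple_closure n lam a i"
  proof (cases "i \<in> {1..n}")
    case True
    then show ?thesis using le ge by (simp add: antisym)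
  next
    case False
    then show ?thesis by (simp add: Lam_outside[OF b(1)] tuple_closure_outside)
  qed
qed

lemma gtype_subset_orb_le:
  assumes a: "a \<in> Lam n lam" "closed_tuple n lam a"
    and b: "b \<in> Lam n lam" "gtype p n lam b \<subseteq> orb p n lam a"
  shows "tuple_le n b a"
proof -
  obtain z where z: "z \<in> gtype p n lam b" using gtype_nonempty[OF b(1)] by blast
  then obtain x \<phi> where "x \<in> gtype p n lam a" "\<phi> \<in> iso G G" "\<phi> x = z"
    using b(2) unfolding orb_def automorphic_def by blast
  then show ?thesis
    using iso_gtype_le_closed[of \<phi> x a b a] z a Lam_le[OF a(1)] unfolding tuple_le_def by blast
qed

end

theorem mainTheorem2:
  fixes p n :: nat and lam :: "nat \<Rightarrow> nat"
  assumes "Factorial_Ring.prime p"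
    and "\<forall>i\<in>{2..n}. lam (i - 1) \<le> lam i"
  shows "(\<forall>a\<in>Lam n lam. \<exists>!b. canonical n lam b \<and> types_automorphic p n lam a b)
       \<and> (\<forall>a. canonical n lam a \<longrightarrow>
            a \<in> {b \<in> Lam n lam. gtype p n lam b \<subseteq> orb p n lam a}
          \<and> (\<forall>b \<in> {b \<in> Lam n lam. gtype p n lam b \<subseteq> orb p n lam a}. tuple_le n b a))"
proof -
  interpret prime_power_product p n lam using assms(1) by unfold_locales
  note canonical = canonical_iff_closed_tuple[OF assms(2)]
  have "\<exists>!b. canonical n lam b \<and> types_automorphic p n lam a b" if a: "a \<in> Lam n lam" for a
    using types_automorphic_closure[OF a] types_automorphic_closed_eq_closure[OF a]
      tuple_closure_Lam[OF a] closed_tuple_closure canonical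
    by metis
  moreover have "gtype p n lam a \<subseteq> orb p n lam a" for a
    unfolding orb_def automorphic_def using iso_set_refl by fastforce
  ultimately show ?thesis using gtype_subset_orb_le canonical by blast
qed

end
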